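(* Let $\mathcal{R}^{rsc}$ be a rich single-crossing domain, let $\{R^n\}_{n\ge1}\subseteq\mathcal{R}^{rsc}$ converge to $R\in\mathcal{R}^{rsc}$ in the order topology, and let $(t^{1n},q^{1n})\to(t^1,q^1)$ and $(t^{2n},q^{2n})\to(t^2,q^2)$ be convergent sequences in $\mathbb{Z}$ (Euclidean topology). If $(t^{1n},q^{1n})\,I^n\,(t^{2n},q^{2n})$ for all $n$, where $I^n$ is the indifference relation of $R^n$, then $(t^1,q^1)\,I\,(t^2,q^2)$, where $I$ is the indifference relation of $R$.
   Context: $\mathbb{Z}=[0,\infty)\times[0,1]$. A classical preference is a complete transitive relation $R$ on $\mathbb{Z}$ (strict part $P$, indifference $I$) such that: for all $q$, $t''>t'$ implies $(t',q)P(t'',q)$; for all $t$, $q''>q'$ implies $(t,q'')P(t,q')$; upper and lower contour sets $\{x:xRz\},\{x:zRx\}$ are closed. Two distinct classical preferences satisfy single-crossing if any indifference set of one meets any indifference set of the other in at most one point. A rich single-crossing domain $\mathcal{R}^{rsc}$ is a set of pairwise single-crossing classical preferences such that for all $(t',q'),(t'',q'')$ with $t'<t''$, $q'<q''$ some member is indifferent between them. Writing $(t',q')<(t'',q'')$ for $t'<t''$, $q'<q''$ and $\square(z)=\{x:x=z\text{ or }x<z\}$, for distinct $R',R''$ in the domain, $R'\prec R''$ means $\square(z)\cap\{x:xR''z\}\subseteq\square(z)\cap\{x:xR'z\}$ for every $z$. $\prec$ is a linear order, and $\mathcal{R}^{rsc}$ carries the associated order topology. *)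

theory Defs
  imports "HOL-Analysis.Analysis"
begin

type_synonym point = "real \<times> real"
type_synonym pref = "point \<Rightarrow> point \<Rightarrow> bool"

definition ZZ :: "point set" where
  "ZZ = {(t, q). 0 \<le> t \<and> 0 \<le> q \<and> q \<le> 1}"

definition strict_pref :: "pref \<Rightarrow> point \<Rightarrow> point \<Rightarrow> bool" where
  "strict_pref R x y \<longleftrightarrow> R x y \<and> \<not> R y x"

definition indiff :: "pref \<Rightarrow> point \<Rightarrow> point \<Rightarrow> bool" where
  "indiff R x y \<longleftrightarrow> R x y \<and> R y x"

definition classical :: "pref \<Rightarrow> bool" where
  "classical R \<longleftrightarrow>
     (\<forall>x y. R x y \<longrightarrow> x \<in> ZZ \<and> y \<in> ZZ) \<and>
     (\<forall>x\<in>ZZ. \<forall>y\<in>ZZ. R x y \<or> R y x) \<and>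
     (\<forall>x\<in>ZZ. \<forall>y\<in>ZZ. \<forall>z\<in>ZZ. R x y \<longrightarrow> R y z \<longrightarrow> R x z) \<and>
     (\<forall>q t' t''. (t', q) \<in> ZZ \<longrightarrow> (t'', q) \<in> ZZ \<longrightarrow> t'' > t' \<longrightarrow>
        strict_pref R (t', q) (t'', q)) \<and>
     (\<forall>t q' q''. (t, q') \<in> ZZ \<longrightarrow> (t, q'') \<in> ZZ \<longrightarrow> q'' > q' \<longrightarrow>
        strict_pref R (t, q'') (t, q')) \<and>
     (\<forall>z\<in>ZZ. closedin (top_of_set ZZ) {x\<in>ZZ. R x z} \<and>
              closedin (top_of_set ZZ) {x\<in>ZZ. R z x})"

definition indiff_set :: "pref \<Rightarrow> point \<Rightarrow> point set" where
  "indiff_set R z = {x\<in>ZZ. indiff R x z}"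

definition single_crossing :: "pref \<Rightarrow> pref \<Rightarrow> bool" where
  "single_crossing R' R'' \<longleftrightarrow>
     (\<forall>z'\<in>ZZ. \<forall>z''\<in>ZZ. \<forall>x y.
        x \<in> indiff_set R' z' \<inter> indiff_set R'' z'' \<longrightarrow>
        y \<in> indiff_set R' z' \<inter> indiff_set R'' z'' \<longrightarrow> x = y)"

definition point_less :: "point \<Rightarrow> point \<Rightarrow> bool" where
  "point_less x y \<longleftrightarrow> fst x < fst y \<and> snd x < snd y"

definition rich_single_crossing :: "pref set \<Rightarrow> bool" where
  "rich_single_crossing D \<longleftrightarrow>
     (\<forall>R\<in>D. classical R) \<and>
     (\<forall>R'\<in>D. \<forall>R''\<in>D. R' \<noteq> R'' \<longrightarrow> single_crossing R' R'') \<and>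
     (\<forall>x\<in>ZZ. \<forall>y\<in>ZZ. point_less x y \<longrightarrow> (\<exists>R\<in>D. indiff R x y))"

definition box_below :: "point \<Rightarrow> point set" where
  "box_below z = {x\<in>ZZ. x = z \<or> point_less x z}"

definition pref_prec :: "pref \<Rightarrow> pref \<Rightarrow> bool" where
  "pref_prec R' R'' \<longleftrightarrow> R' \<noteq> R'' \<and>
     (\<forall>z\<in>ZZ. box_below z \<inter> {x\<in>ZZ. R'' x z} \<subseteq> box_below z \<inter> {x\<in>ZZ. R' x z})"

definition order_top :: "pref set \<Rightarrow> pref topology" where
  "order_top D = subtopology
     (topology (generate_topology
        ({{R\<in>D. pref_prec R A} | A. A \<in> D} \<union> {{R\<in>D. pref_prec A R} | A. A \<in> D}))) D"

end

theory Submission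
  imports Defs
begin

text \<open>
  It suffices to show that weak preference passes to the limit. Suppose Rs n (z1s n) (z2s n) for
  all n but not R z1 z2. Two distinct bundles that are not strictly ordered coordinatewise are
  strictly ranked by every classical preference, so eventually z1s n and z2s n must be strictly
  ordered. If z1 lies weakly below z2, richness provides A \<in> D indifferent between two points
  near z1 and z2 with A \<prec> R and \<not> A z1 z2; convergence in the order topology gives
  A \<prec> Rs n eventually, and then z1s n < z2s n would force A (z1s n) (z2s n). The case of
  z2 below z1 is symmetric, with some B \<succ> R.

  The key step is that A \<prec> R already follows from one ordered pair on which A and R disagree.
  Along the staircase from (fst b, snd a) through b to (fst a, snd b), the ordered pairs (a, b)
  split into two closed sets according to which preference ranks the staircase more favourably
  relative to a; single crossing makes them disjoint, so by connectedness one of them is empty.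
\<close>

lemma dist_Pair_le: "dist (a, b) (c, d) \<le> dist a c + dist b d"
  unfolding dist_Pair_Pair by (rule sqrt_sum_squares_le_sum) simp_all

lemma eventually_less_tendsto:
  fixes f g :: "'a \<Rightarrow> real"
  assumes "(f \<longlongrightarrow> a) F" "(g \<longlongrightarrow> b) F" "a < b"
  shows "\<forall>\<^sub>F n in F. f n < g n"
proof -
  have "((\<lambda>n. g n - f n) \<longlongrightarrow> b - a) F" by (intro tendsto_diff assms)
  then have "\<forall>\<^sub>F n in F. 0 < g n - f n" using assms(3) by (intro order_tendstoD(1)) auto
  then show ?thesis by (auto elim: eventually_mono)
qed

lemma eventually_not_point_less:
  assumes f: "(f \<longlongrightarrow> x) F" and g: "(g \<longlongrightarrow> y) F" and "\<not> (fst x \<le> fst y \<and> snd x \<le> snd y)"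
  shows "\<forall>\<^sub>F n in F. \<not> point_less (f n) (g n)"
proof (cases "fst y < fst x")
  case True
  then show ?thesis using eventually_less_tendsto[OF tendsto_fst[OF g] tendsto_fst[OF f]]
    by (auto simp: point_less_def elim: eventually_mono)
next
  case False
  then have "snd y < snd x" using assms(3) by auto
  then show ?thesis using eventually_less_tendsto[OF tendsto_snd[OF g] tendsto_snd[OF f]]
    by (auto simp: point_less_def elim: eventually_mono)
qed

definition dominates :: "point \<Rightarrow> point \<Rightarrow> bool" where
  "dominates x y \<longleftrightarrow> fst x \<le> fst y \<and> snd y \<le> snd x"

lemma mem_ZZ_iff: "x \<in> ZZ \<longleftrightarrow> 0 \<le> fst x \<and> 0 \<le> snd x \<and> snd x \<le> 1"
  by (cases x) (simp add: ZZ_def)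

lemma closed_ZZ: "closed ZZ"
proof -
  have "ZZ = {x. 0 \<le> fst x} \<inter> {x. 0 \<le> snd x} \<inter> {x. snd x \<le> 1}"
    by (auto simp: mem_ZZ_iff)
  moreover have "closed ({x::point. 0 \<le> fst x} \<inter> {x. 0 \<le> snd x} \<inter> {x. snd x \<le> 1})"
    by (intro closed_Int closed_Collect_le continuous_intros)
  ultimately show ?thesis by simp
qed

lemma convex_ZZ: "convex ZZ"
  unfolding convex_def mem_ZZ_iff
  by (auto intro!: add_nonneg_nonneg mult_nonneg_nonneg convex_bound_le simp: ZZ_def)

lemma point_less_or_dominates:
  "point_less x y \<or> point_less y x \<or> dominates x y \<or> dominates y x"
  unfolding point_less_def dominates_def by linarith

subsection \<open>Classical preferences\<close>

context
  fixes S :: pref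
  assumes S: "classical S"
begin

lemma classical_in_ZZ: "S x y \<Longrightarrow> x \<in> ZZ \<and> y \<in> ZZ"
  using S unfolding classical_def by blast

lemma classical_complete: "x \<in> ZZ \<Longrightarrow> y \<in> ZZ \<Longrightarrow> \<not> S x y \<Longrightarrow> S y x"
  using S unfolding classical_def by blast

lemma classical_refl: "x \<in> ZZ \<Longrightarrow> S x x"
  using S unfolding classical_def by blast

lemma classical_trans: "S x y \<Longrightarrow> S y z \<Longrightarrow> S x z"
  using S classical_in_ZZ unfolding classical_def by blast

lemma closedin_upper_contour: "z \<in> ZZ \<Longrightarrow> closedin (top_of_set ZZ) {x\<in>ZZ. S x z}"
  using S unfolding classical_def by blast

lemma closedin_lower_contour: "z \<in> ZZ \<Longrightarrow> closedin (top_of_set ZZ) {x\<in>ZZ. S z x}"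
  using S unfolding classical_def by blast

lemma openin_strictly_worse:
  assumes "z \<in> ZZ"
  shows "openin (top_of_set ZZ) {x\<in>ZZ. \<not> S x z}"
proof -
  have "{x\<in>ZZ. \<not> S x z} = ZZ - {x\<in>ZZ. S x z}" by blast
  with assms show ?thesis by (simp add: openin_diff closedin_upper_contour)
qed

lemma openin_strictly_better:
  assumes "z \<in> ZZ"
  shows "openin (top_of_set ZZ) {x\<in>ZZ. \<not> S z x}"
proof -
  have "{x\<in>ZZ. \<not> S z x} = ZZ - {x\<in>ZZ. S z x}" by blast
  with assms show ?thesis by (simp add: openin_diff closedin_lower_contour)
qed

lemma classical_dominates:
  assumes x: "x \<in> ZZ" and y: "y \<in> ZZ" and xy: "dominates x y"
  shows "S x y"
proof -
  obtain t q t' q' where xy_eq: "x = (t, q)" "y = (t', q')" by (cases x, cases y) auto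
  have m: "(t, q') \<in> ZZ" using x y xy xy_eq by (auto simp: mem_ZZ_iff dominates_def)
  have "S (t, q) (t, q')"
  proof (cases "q' < q")
    case True
    then show ?thesis using S m x xy_eq unfolding classical_def strict_pref_def by blast
  next
    case False
    then show ?thesis using xy xy_eq classical_refl[OF m] by (simp add: dominates_def)
  qed
  moreover have "S (t, q') (t', q')"
  proof (cases "t < t'")
    case True
    then show ?thesis using S m y xy_eq unfolding classical_def strict_pref_def by blast
  next
    case False
    then show ?thesis using xy xy_eq classical_refl[OF m] by (simp add: dominates_def)
  qed
  ultimately show ?thesis using classical_trans xy_eq by blast
qed

lemma classical_dominates_strict:
  assumes x: "x \<in> ZZ" and y: "y \<in> ZZ" and xy: "dominates x y" "x \<noteq> y"
  shows "\<not> S y x"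
proof -
  obtain t q t' q' where xy_eq: "x = (t, q)" "y = (t', q')" by (cases x, cases y) auto
  have m: "(t, q') \<in> ZZ" using x y xy xy_eq by (auto simp: mem_ZZ_iff dominates_def)
  show ?thesis
  proof (cases "q' < q")
    case True
    then have "\<not> S (t, q') (t, q)" using S m x xy_eq unfolding classical_def strict_pref_def by blast
    moreover have "S (t, q') (t', q')"
      using classical_dominates[OF m y] xy xy_eq by (simp add: dominates_def)
    ultimately show ?thesis using xy_eq classical_trans by blast
  next
    case False
    then have "q = q'" "t < t'" using xy xy_eq by (auto simp: dominates_def)
    then show ?thesis using S m y xy_eq unfolding classical_def strict_pref_def by blast
  qed
qed

lemma classical_not_pref_intermediate:
  assumes u: "u \<in> ZZ" and v: "v \<in> ZZ" and uv: "\<not> S u v"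
  obtains w where "w \<in> ZZ" "\<not> S u w" "\<not> S w v"
proof -
  have "\<not> ZZ \<subseteq> {w\<in>ZZ. S w v} \<union> {w\<in>ZZ. S u w}"
  proof
    assume cover: "ZZ \<subseteq> {w\<in>ZZ. S w v} \<union> {w\<in>ZZ. S u w}"
    have "{w\<in>ZZ. S w v} \<inter> {w\<in>ZZ. S u w} = {}" using uv classical_trans by blast
    moreover have "{w\<in>ZZ. S w v} \<noteq> {}" "{w\<in>ZZ. S u w} \<noteq> {}"
      using classical_refl u v by blast+
    moreover have "connected ZZ" by (simp add: convex_ZZ convex_connected)
    ultimately show False
      using cover closedin_upper_contour[OF v] closedin_lower_contour[OF u]
      unfolding connected_closedin by blast
  qed
  then show thesis using that by blast
qed

lemma closedin_pref_preimage:
  assumes f: "continuous_on X f" "f ` X \<subseteq> ZZ" and g: "continuous_on X g" "g ` X \<subseteq> ZZ"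
  shows "closedin (top_of_set X) {p\<in>X. S (f p) (g p)}"
proof -
  let ?U = "\<Union>w\<in>ZZ. (X \<inter> f -` {x\<in>ZZ. \<not> S x w}) \<inter> (X \<inter> g -` {y\<in>ZZ. \<not> S w y})"
  have "X - {p\<in>X. S (f p) (g p)} = ?U"
  proof (intro set_eqI iffI)
    fix p assume "p \<in> X - {p\<in>X. S (f p) (g p)}"
    moreover then obtain w where "w \<in> ZZ" "\<not> S (f p) w" "\<not> S w (g p)"
      using classical_not_pref_intermediate f(2) g(2) by blast
    ultimately show "p \<in> ?U" using f(2) g(2) by blast
  next
    fix p assume "p \<in> ?U"
    then obtain w where "w \<in> ZZ" "p \<in> X" "\<not> S (f p) w" "\<not> S w (g p)" "g p \<in> ZZ" by blast
    then show "p \<in> X - {p\<in>X. S (f p) (g p)}"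
      using classical_complete classical_trans by blast
  qed
  moreover have "openin (top_of_set X) ?U"
  proof (intro openin_Union ballI)
    fix T assume "T \<in> (\<lambda>w. (X \<inter> f -` {x\<in>ZZ. \<not> S x w}) \<inter> (X \<inter> g -` {y\<in>ZZ. \<not> S w y})) ` ZZ"
    then obtain w where "w \<in> ZZ"
      and T: "T = (X \<inter> f -` {x\<in>ZZ. \<not> S x w}) \<inter> (X \<inter> g -` {y\<in>ZZ. \<not> S w y})" by blast
    have fg: "f \<in> X \<rightarrow> ZZ" "g \<in> X \<rightarrow> ZZ"
      using f(2) g(2) by (simp_all add: image_subset_iff_funcset)
    have "openin (top_of_set X) (X \<inter> f -` {x\<in>ZZ. \<not> S x w})"
      by (rule continuous_openin_preimage[OF f(1) fg(1) openin_strictly_worse[OF \<open>w \<in> ZZ\<close>]])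
    moreover have "openin (top_of_set X) (X \<inter> g -` {y\<in>ZZ. \<not> S w y})"
      by (rule continuous_openin_preimage[OF g(1) fg(2) openin_strictly_better[OF \<open>w \<in> ZZ\<close>]])
    ultimately show "openin (top_of_set X) T" unfolding T by (rule openin_Int)
  qed
  ultimately have "openin (top_of_set X) (X - {p\<in>X. S (f p) (g p)})" by (simp only:)
  then show ?thesis unfolding closedin_def by auto
qed

lemma classical_ivt:
  fixes g :: "real \<Rightarrow> point"
  assumes v: "v \<in> ZZ" and ab: "a \<le> b" and g: "continuous_on {a..b} g" "g ` {a..b} \<subseteq> ZZ"
    and ends: "S v (g a)" "S (g b) v"
  obtains s where "s \<in> {a..b}" "S (g s) v" "S v (g s)"
proof -
  let ?E1 = "{s\<in>{a..b}. S (g s) v}" and ?E2 = "{s\<in>{a..b}. S v (g s)}"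
  have "closedin (top_of_set {a..b}) ?E1" "closedin (top_of_set {a..b}) ?E2"
    by (rule closedin_pref_preimage; use g v in auto)+
  moreover have "{a..b} \<subseteq> ?E1 \<union> ?E2" using g(2) v classical_complete by blast
  moreover have "?E1 \<noteq> {}" "?E2 \<noteq> {}" using ends ab by auto
  moreover have "connected {a..b}" by simp
  ultimately have "?E1 \<inter> ?E2 \<noteq> {}" unfolding connected_closedin by blast
  then show thesis using that by blast
qed

lemma not_pref_nhds:
  assumes u: "u \<in> ZZ" and v: "v \<in> ZZ" and uv: "\<not> S u v"
  obtains e where "e > 0" "\<And>x y. x \<in> ZZ \<Longrightarrow> y \<in> ZZ \<Longrightarrow> dist x u < e \<Longrightarrow> dist y v < e \<Longrightarrow> \<not> S x y"
proof -
  obtain w where w: "w \<in> ZZ" "\<not> S u w" "\<not> S w v"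
    using classical_not_pref_intermediate[OF u v uv] .
  obtain e1 where e1: "e1 > 0" "\<And>x. x \<in> ZZ \<Longrightarrow> dist x u < e1 \<Longrightarrow> \<not> S x w"
    using openin_strictly_worse[OF w(1)] u w(2) unfolding openin_euclidean_subtopology_iff by blast
  obtain e2 where e2: "e2 > 0" "\<And>y. y \<in> ZZ \<Longrightarrow> dist y v < e2 \<Longrightarrow> \<not> S w y"
    using openin_strictly_better[OF w(1)] v w(3) unfolding openin_euclidean_subtopology_iff by blast
  show thesis
  proof (rule that[of "min e1 e2"])
    fix x y assume xy: "x \<in> ZZ" "y \<in> ZZ" "dist x u < min e1 e2" "dist y v < min e1 e2"
    have "\<not> S x w" using e1(2) xy by simp
    moreover have "S y w" using e2(2) xy classical_complete w(1) by simp
    ultimately show "\<not> S x y" using classical_trans by blast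
  qed (use e1 e2 in auto)
qed

lemma eventually_not_pref:
  assumes "u \<in> ZZ" "v \<in> ZZ" "\<not> S u v" and "(f \<longlongrightarrow> u) F" "(g \<longlongrightarrow> v) F"
    and "\<And>n. f n \<in> ZZ" "\<And>n. g n \<in> ZZ"
  shows "\<forall>\<^sub>F n in F. \<not> S (f n) (g n)"
proof -
  obtain e where e: "e > 0"
    "\<And>x y. x \<in> ZZ \<Longrightarrow> y \<in> ZZ \<Longrightarrow> dist x u < e \<Longrightarrow> dist y v < e \<Longrightarrow> \<not> S x y"
    using not_pref_nhds assms(1-3) by blast
  have "\<forall>\<^sub>F n in F. dist (f n) u < e \<and> dist (g n) v < e"
    using e(1) assms(4,5) by (intro eventually_conj tendstoD)
  then show ?thesis by eventually_elim (use e(2) assms(6,7) in blast)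
qed

end

subsection \<open>Comparing two classical preferences\<close>

lemma single_crossing_indiff_eq:
  assumes "single_crossing S M" "classical S" "classical M" "indiff S u v" "indiff M u v"
  shows "u = v"
proof -
  have "v \<in> ZZ" using assms(2,4) classical_in_ZZ unfolding indiff_def by blast
  then have "u \<in> indiff_set S v \<inter> indiff_set M v" "v \<in> indiff_set S v \<inter> indiff_set M v"
    using assms classical_in_ZZ classical_refl unfolding indiff_set_def indiff_def by blast+
  then show ?thesis using assms(1) \<open>v \<in> ZZ\<close> unfolding single_crossing_def by blast
qed

definition less_pairs :: "(point \<times> point) set" where
  "less_pairs = {p. fst p \<in> ZZ \<and> snd p \<in> ZZ \<and> point_less (fst p) (snd p)}"

lemma connected_less_pairs: "connected less_pairs"
proof -
  have "less_pairs =
      (ZZ \<times> ZZ) \<inter> {p. 0 < inner ((-1, 0), (1, 0)) p} \<inter> {p. 0 < inner ((0, -1), (0, 1)) p}"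
    by (auto simp: less_pairs_def point_less_def inner_prod_def)
  moreover have
    "convex ((ZZ \<times> ZZ) \<inter> {p. 0 < inner ((-1, 0), (1, 0)) p} \<inter> {p. 0 < inner ((0, -1), (0, 1)) p})"
    by (intro convex_Int convex_Times convex_ZZ convex_halfspace_gt)
  ultimately show ?thesis by (simp add: convex_connected)
qed

text \<open>For a pair (a, b), the staircase runs up from (fst b, snd a) to b (s \<in> [0, 1]) and then
  left to (fst a, snd b) (s \<in> [1, 2]).\<close>
definition staircase :: "point \<times> point \<Rightarrow> real \<Rightarrow> point" where
  "staircase p s = (fst (snd p) - max 0 (s - 1) * (fst (snd p) - fst (fst p)),
                    snd (fst p) + min s 1 * (snd (snd p) - snd (fst p)))"

lemma staircase_0_1_2:
  "staircase (a, b) 0 = (fst b, snd a)" "staircase (a, b) 1 = b" "staircase (a, b) 2 = (fst a, snd b)"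
  by (simp_all add: staircase_def)

lemma staircase_neq_fst: "point_less a b \<Longrightarrow> staircase (a, b) s \<noteq> a"
  by (cases "s \<le> 1") (auto simp: staircase_def point_less_def prod_eq_iff)

lemma dominates_staircase:
  assumes "point_less a b" "s \<le> s'"
  shows "dominates (staircase (a, b) s') (staircase (a, b) s)"
proof -
  have "max 0 (s - 1) * (fst b - fst a) \<le> max 0 (s' - 1) * (fst b - fst a)"
    "min s 1 * (snd b - snd a) \<le> min s' 1 * (snd b - snd a)"
    using assms by (auto intro!: mult_right_mono simp: point_less_def)
  then show ?thesis by (simp add: staircase_def dominates_def)
qed

lemma staircase_inj:
  assumes "point_less a b" "s < s'"
  shows "staircase (a, b) s \<noteq> staircase (a, b) s'"
proof (cases "s < 1")
  case True
  then have "min s 1 * (snd b - snd a) < min s' 1 * (snd b - snd a)"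
    using assms by (intro mult_strict_right_mono) (auto simp: point_less_def)
  then show ?thesis by (auto simp: staircase_def)
next
  case False
  then have "max 0 (s - 1) * (fst b - fst a) < max 0 (s' - 1) * (fst b - fst a)"
    using assms by (intro mult_strict_right_mono) (auto simp: point_less_def)
  then show ?thesis by (auto simp: staircase_def)
qed

lemma staircase_in_ZZ:
  assumes "(a, b) \<in> less_pairs" "s \<in> {0..2}"
  shows "staircase (a, b) s \<in> ZZ"
proof -
  have lt: "point_less a b" and ZZ: "a \<in> ZZ" "b \<in> ZZ" using assms(1) by (auto simp: less_pairs_def)
  have "dominates (staircase (a, b) 2) (staircase (a, b) s)"
    "dominates (staircase (a, b) s) (staircase (a, b) 0)"
    using assms(2) by (auto intro!: dominates_staircase[OF lt])
  then show ?thesis using ZZ lt by (auto simp: staircase_0_1_2 dominates_def mem_ZZ_iff point_less_def)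
qed

lemma continuous_on_staircase: "continuous_on A (staircase p)"
  unfolding staircase_def by (intro continuous_intros)

lemma continuous_on_staircase_pair: "continuous_on P (\<lambda>p. staircase p s)"
  unfolding staircase_def by (intro continuous_intros)

context
  fixes S :: pref
  assumes S: "classical S"
begin

lemma classical_staircase_mono:
  assumes "(a, b) \<in> less_pairs" "s \<in> {0..2}" "s' \<in> {0..2}" "s \<le> s'"
  shows "S (staircase (a, b) s') (staircase (a, b) s)"
  using assms by (intro classical_dominates[OF S] staircase_in_ZZ dominates_staircase)
    (auto simp: less_pairs_def)

lemma classical_staircase_strict:
  assumes "(a, b) \<in> less_pairs" "s \<in> {0..2}" "s' \<in> {0..2}" "s < s'"
  shows "\<not> S (staircase (a, b) s) (staircase (a, b) s')"
  using assms by (intro classical_dominates_strict[OF S] staircase_in_ZZ dominates_staircase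
      staircase_inj[symmetric]) (auto simp: less_pairs_def)

end

definition agree_above :: "pref \<Rightarrow> pref \<Rightarrow> (point \<times> point) set" where
  "agree_above S M = {p\<in>less_pairs. \<forall>s\<in>{0..2}. S (fst p) (staircase p s) \<or> M (staircase p s) (fst p)}"

context
  fixes S M :: pref
  assumes S: "classical S" and M: "classical M"
begin

lemma closedin_agree_above: "closedin (top_of_set less_pairs) (agree_above S M)"
proof -
  have ZZ: "fst ` less_pairs \<subseteq> ZZ" "(\<lambda>p. staircase p s) ` less_pairs \<subseteq> ZZ" if "s \<in> {0..2}" for s
    using staircase_in_ZZ that by (auto simp: less_pairs_def)
  have "agree_above S M = (\<Inter>s\<in>{0..2}. {p\<in>less_pairs. S (fst p) (staircase p s)}
                                      \<union> {p\<in>less_pairs. M (staircase p s) (fst p)})"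
    unfolding agree_above_def by force
  moreover have "closedin (top_of_set less_pairs)
      ({p\<in>less_pairs. S (fst p) (staircase p s)} \<union> {p\<in>less_pairs. M (staircase p s) (fst p)})"
    if "s \<in> {0..2}" for s
    using ZZ[OF that]
    by (intro closedin_Un closedin_pref_preimage[OF S] closedin_pref_preimage[OF M]
        continuous_on_fst continuous_on_id continuous_on_staircase_pair)
  ultimately show ?thesis by (auto intro: closedin_INT)
qed

lemma agree_above_cover: "less_pairs \<subseteq> agree_above S M \<union> agree_above M S"
proof
  fix p assume p: "p \<in> less_pairs"
  obtain a b where ab: "p = (a, b)" by (cases p)
  have a: "a \<in> ZZ" using p ab by (simp add: less_pairs_def)
  show "p \<in> agree_above S M \<union> agree_above M S"
  proof (rule ccontr)
    assume "p \<notin> agree_above S M \<union> agree_above M S"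
    then obtain s1 s2 where
      s1: "s1 \<in> {0..2}" "\<not> S a (staircase p s1)" "\<not> M (staircase p s1) a" and
      s2: "s2 \<in> {0..2}" "\<not> M a (staircase p s2)" "\<not> S (staircase p s2) a"
      using p ab unfolding agree_above_def by auto
    have in_ZZ: "staircase p s1 \<in> ZZ" "staircase p s2 \<in> ZZ"
      using staircase_in_ZZ p s1(1) s2(1) ab by blast+
    show False
    proof (cases "s1 \<le> s2")
      case True
      then have "S (staircase p s2) (staircase p s1)"
        using classical_staircase_mono[OF S] p s1(1) s2(1) ab by blast
      then show False
        using classical_complete[OF S a in_ZZ(1) s1(2)] classical_trans[OF S] s2(3) by blast
    next
      case False
      then have "M (staircase p s1) (staircase p s2)"
        using classical_staircase_mono[OF M] p s1(1) s2(1) ab by auto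
      then show False
        using classical_complete[OF M a in_ZZ(2) s2(2)] classical_trans[OF M] s1(3) by blast
    qed
  qed
qed

lemma mem_agree_above:
  assumes xz: "(x, z) \<in> less_pairs" and "S x z" "M z x"
  shows "(x, z) \<in> agree_above S M"
  unfolding agree_above_def
proof (intro CollectI conjI ballI)
  fix s assume s: "s \<in> {0..2::real}"
  show "S (fst (x, z)) (staircase (x, z) s) \<or> M (staircase (x, z) s) (fst (x, z))"
  proof (cases "s \<le> 1")
    case True
    then have "S z (staircase (x, z) s)"
      using classical_staircase_mono[OF S xz s, of 1] by (simp add: staircase_0_1_2)
    then show ?thesis using assms(2) classical_trans[OF S] by auto
  next
    case False
    then have "M (staircase (x, z) s) z"
      using classical_staircase_mono[OF M xz _ s, of 1] by (simp add: staircase_0_1_2)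
    then show ?thesis using assms(3) classical_trans[OF M] by auto
  qed
qed (use xz in simp)

end

lemma agree_above_disjoint:
  assumes S: "classical S" and M: "classical M" and sc: "single_crossing S M"
  shows "agree_above S M \<inter> agree_above M S = {}"
proof (rule ccontr)
  assume "agree_above S M \<inter> agree_above M S \<noteq> {}"
  then obtain a b where ab: "(a, b) \<in> less_pairs"
    and above: "\<forall>s\<in>{0..2}. S a (staircase (a, b) s) \<or> M (staircase (a, b) s) a"
    and below: "\<forall>s\<in>{0..2}. M a (staircase (a, b) s) \<or> S (staircase (a, b) s) a"
    unfolding agree_above_def by auto
  let ?g = "staircase (a, b)"
  have a: "a \<in> ZZ" and lt: "point_less a b" using ab by (auto simp: less_pairs_def)
  have g: "continuous_on {0..2} ?g" "?g ` {0..2} \<subseteq> ZZ"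
    using continuous_on_staircase staircase_in_ZZ[OF ab] by auto
  have gZZ: "?g 0 \<in> ZZ" "?g 2 \<in> ZZ" using g(2) by auto
  have gdom: "dominates a (?g 0)" "dominates (?g 2) a"
    using lt by (simp_all add: staircase_0_1_2 dominates_def point_less_def)
  have gne: "a \<noteq> ?g 0" "?g 2 \<noteq> a" using staircase_neq_fst[OF lt] by metis+
  obtain s0 where s0: "s0 \<in> {0..2}" "S (?g s0) a" "S a (?g s0)"
    using classical_ivt[OF S a _ g] classical_dominates[OF S a gZZ(1) gdom(1)]
      classical_dominates[OF S gZZ(2) a gdom(2)] by auto
  have "\<not> S (?g 0) a" "\<not> S a (?g 2)"
    using classical_dominates_strict[OF S a gZZ(1) gdom(1) gne(1)]
      classical_dominates_strict[OF S gZZ(2) a gdom(2) gne(2)] by blast+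
  then have "s0 \<noteq> 0" "s0 \<noteq> 2" using s0 by auto
  then have s0': "0 < s0" "s0 < 2" using s0(1) by auto
  have "{s0<..2} \<subseteq> {s\<in>{0..2}. M (?g s) a}"
  proof
    fix s assume "s \<in> {s0<..2}"
    then have s: "s \<in> {0..2}" "s0 < s" using s0' by auto
    have "\<not> S a (?g s)"
      using s0(2) classical_trans[OF S] classical_staircase_strict[OF S ab s0(1) s] by blast
    then show "s \<in> {s\<in>{0..2}. M (?g s) a}" using above s by auto
  qed
  moreover have "{0..<s0} \<subseteq> {s\<in>{0..2}. M a (?g s)}"
  proof
    fix s assume "s \<in> {0..<s0}"
    then have s: "s \<in> {0..2}" "s < s0" using s0' by auto
    have "\<not> S (?g s) a"
      using s0(3) classical_trans[OF S] classical_staircase_strict[OF S ab s(1) s0(1) s(2)] by blast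
    then show "s \<in> {s\<in>{0..2}. M a (?g s)}" using below s by auto
  qed
  moreover have "closed {s\<in>{0..2}. M (?g s) a}" "closed {s\<in>{0..2}. M a (?g s)}"
    by (rule closedin_closed_trans[OF closedin_pref_preimage[OF M] closed_atLeastAtMost];
        use g a in auto)+
  ultimately have "{s0..2} \<subseteq> {s\<in>{0..2}. M (?g s) a}" "{0..s0} \<subseteq> {s\<in>{0..2}. M a (?g s)}"
    using closure_minimal closure_greaterThanAtMost[OF s0'(2)] closure_atLeastLessThan[OF s0'(1)]
    by metis+
  then have "indiff M (?g s0) a" using s0(1) unfolding indiff_def by auto
  moreover have "indiff S (?g s0) a" using s0 unfolding indiff_def by auto
  ultimately show False
    using single_crossing_indiff_eq[OF sc S M] staircase_neq_fst[OF lt] by blast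
qed

lemma agree_above_empty:
  assumes S: "classical S" and M: "classical M" and sc: "single_crossing S M"
  shows "agree_above S M = {} \<or> agree_above M S = {}"
  using connected_less_pairs closedin_agree_above[OF S M] closedin_agree_above[OF M S]
    agree_above_cover[OF S M] agree_above_disjoint[OF S M sc]
  unfolding connected_closedin by blast

lemma pref_prec_if_crossing:
  assumes S: "classical S" and M: "classical M" and "S \<noteq> M" and sc: "single_crossing S M"
    and xz: "(x, z) \<in> less_pairs" "S x z" "M z x"
  shows "pref_prec S M"
  unfolding pref_prec_def
proof (intro conjI ballI subsetI)
  fix y w assume y: "y \<in> ZZ" and w: "w \<in> box_below y \<inter> {x\<in>ZZ. M x y}"
  have "S w y"
  proof (cases "w = y")
    case True
    then show ?thesis using classical_refl[OF S y] by simp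
  next
    case False
    then have wy: "(w, y) \<in> less_pairs" "M w y" using w y by (auto simp: box_below_def less_pairs_def)
    have "(x, z) \<in> agree_above S M" using mem_agree_above[OF S M xz] .
    then have "agree_above M S = {}" using agree_above_empty[OF S M sc] by auto
    moreover have "S y w" if "\<not> S w y"
      using classical_complete[OF S _ _ that] wy(1) by (simp add: less_pairs_def)
    ultimately show ?thesis using mem_agree_above[OF M S wy] by blast
  qed
  then show "w \<in> box_below y \<inter> {x\<in>ZZ. S x y}" using w by auto
qed fact

subsection \<open>Rich domains and the order topology\<close>

lemma pref_precD:
  "pref_prec S M \<Longrightarrow> y \<in> ZZ \<Longrightarrow> w \<in> ZZ \<Longrightarrow> point_less w y \<Longrightarrow> M w y \<Longrightarrow> S w y"
  unfolding pref_prec_def box_below_def by blast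

lemma pref_prec_upper:
  assumes pp: "pref_prec S M" and S: "classical S" and M: "classical M"
    and x: "x \<in> ZZ" and y: "y \<in> ZZ" and xy: "point_less x y" and "S y x"
  shows "M y x"
proof (rule ccontr)
  assume "\<not> M y x"
  then obtain e where e: "e > 0" "\<And>w. w \<in> ZZ \<Longrightarrow> dist w x < e \<Longrightarrow> \<not> M y w"
    using not_pref_nhds[OF M y x] y by (metis dist_self)
  define d where "d = min (e / 2) ((fst y - fst x) / 2)"
  have d: "0 < d" "d < e" "fst x + d < fst y"
    using e(1) xy unfolding d_def point_less_def by (auto simp: min_def field_simps)
  define w where "w = (fst x + d, snd x)"
  have w: "w \<in> ZZ" "point_less w y" "dominates x w" "x \<noteq> w"
    using x xy d by (auto simp: w_def mem_ZZ_iff point_less_def dominates_def prod_eq_iff)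
  have "dist w x < e" using d by (cases x) (simp add: w_def dist_Pair_Pair dist_real_def)
  then have "M w y" using classical_complete[OF M y w(1)] e(2) w(1) by blast
  then have "S w y" using pref_precD[OF pp y w(1,2)] by blast
  then have "S w x" using classical_trans[OF S] \<open>S y x\<close> by blast
  then show False using classical_dominates_strict[OF S x w(1,3,4)] by simp
qed

context
  fixes D :: "pref set"
  assumes D: "rich_single_crossing D"
begin

lemma rich_classical: "A \<in> D \<Longrightarrow> classical A"
  using D unfolding rich_single_crossing_def by blast

lemma rich_single_crossing_pair: "A \<in> D \<Longrightarrow> B \<in> D \<Longrightarrow> A \<noteq> B \<Longrightarrow> single_crossing A B"
  using D unfolding rich_single_crossing_def by blast

lemma rich_pref_prec:
  assumes R: "R \<in> D" and lo: "lo \<in> ZZ" and hi: "hi \<in> ZZ" and lt: "point_less lo hi"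
  obtains A where "A \<in> D" "indiff A lo hi" "\<not> R lo hi \<Longrightarrow> pref_prec A R" "\<not> R hi lo \<Longrightarrow> pref_prec R A"
proof -
  obtain A where A: "A \<in> D" "indiff A lo hi"
    using D lo hi lt unfolding rich_single_crossing_def by blast
  have cA: "classical A" and cR: "classical R" using A(1) R by (auto intro: rich_classical)
  have lohi: "(lo, hi) \<in> less_pairs" using lo hi lt by (simp add: less_pairs_def)
  show thesis
  proof (rule that[OF A])
    assume "\<not> R lo hi"
    moreover then have "A \<noteq> R" using A(2) unfolding indiff_def by auto
    ultimately show "pref_prec A R"
      using pref_prec_if_crossing[OF cA cR _ rich_single_crossing_pair[OF A(1) R] lohi]
        classical_complete[OF cR lo hi] A(2) unfolding indiff_def by blast
  next
    assume "\<not> R hi lo"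
    moreover then have "R \<noteq> A" using A(2) unfolding indiff_def by auto
    ultimately show "pref_prec R A"
      using pref_prec_if_crossing[OF cR cA _ rich_single_crossing_pair[OF R A(1)] lohi]
        classical_complete[OF cR hi lo] A(2) unfolding indiff_def by blast
  qed
qed

end

lemma openin_order_top_rays:
  assumes "A \<in> D"
  shows "openin (order_top D) {S\<in>D. pref_prec A S}" "openin (order_top D) {S\<in>D. pref_prec S A}"
proof -
  let ?G = "{{R\<in>D. pref_prec R A} | A. A \<in> D} \<union> {{R\<in>D. pref_prec A R} | A. A \<in> D}"
  have top: "openin (topology (generate_topology ?G)) = generate_topology ?G"
    by (rule topology_inverse') (auto simp: istopology_def intro: generate_topology.intros)
  have "T \<in> ?G \<Longrightarrow> openin (order_top D) (T \<inter> D)" for T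
    unfolding order_top_def openin_subtopology top by (blast intro: generate_topology.Basis)
  moreover have "{S\<in>D. pref_prec A S} \<in> ?G" "{S\<in>D. pref_prec S A} \<in> ?G" using assms by blast+
  ultimately show "openin (order_top D) {S\<in>D. pref_prec A S}"
    "openin (order_top D) {S\<in>D. pref_prec S A}" by (metis (no_types, lifting) Int_absorb2 mem_Collect_eq subsetI)+
qed

lemma eventually_pref_prec:
  assumes lim: "limitin (order_top D) Rs R F" and A: "A \<in> D"
  shows "pref_prec A R \<Longrightarrow> \<forall>\<^sub>F n in F. pref_prec A (Rs n)"
    and "pref_prec R A \<Longrightarrow> \<forall>\<^sub>F n in F. pref_prec (Rs n) A"
proof -
  have "R \<in> D" using limitin_topspace[OF lim] by (simp add: order_top_def)
  then show "pref_prec A R \<Longrightarrow> \<forall>\<^sub>F n in F. pref_prec A (Rs n)"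
    "pref_prec R A \<Longrightarrow> \<forall>\<^sub>F n in F. pref_prec (Rs n) A"
    using limitinD[OF lim openin_order_top_rays(1)[OF A]]
      limitinD[OF lim openin_order_top_rays(2)[OF A]]
    by (auto elim: eventually_mono)
qed

lemma classical_not_pref_dominated:
  assumes S: "classical S" and "x \<in> ZZ" "x' \<in> ZZ" "y \<in> ZZ" "y' \<in> ZZ"
    and "dominates x' x" "x' \<noteq> x" "dominates y y'" "S y' x'"
  shows "\<not> S x y"
  using assms classical_dominates[OF S] classical_dominates_strict[OF S] classical_trans[OF S] by metis

context
  fixes D :: "pref set" and R :: pref
  assumes D: "rich_single_crossing D" and R: "R \<in> D"
begin

lemma exists_pref_prec_below:
  assumes z1: "z1 \<in> ZZ" and z2: "z2 \<in> ZZ" and z12: "fst z1 \<le> fst z2" "snd z1 < snd z2"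
    and nR: "\<not> R z1 z2"
  obtains A where "A \<in> D" "pref_prec A R" "\<not> A z1 z2"
proof -
  obtain e where e: "e > 0" "\<And>x y. x \<in> ZZ \<Longrightarrow> y \<in> ZZ \<Longrightarrow> dist x z1 < e \<Longrightarrow> dist y z2 < e \<Longrightarrow> \<not> R x y"
    using not_pref_nhds[OF rich_classical[OF D R] z1 z2 nR] by blast
  define d where "d = min (e / 2) ((snd z2 - snd z1) / 2)"
  have d: "0 < d" "d < e" "snd z1 + d < snd z2"
    using e(1) z12 unfolding d_def by (auto simp: min_def field_simps)
  define a1 where "a1 = (fst z1, snd z1 + d)"
  define a2 where "a2 = (fst z2 + d, snd z2)"
  have a: "a1 \<in> ZZ" "a2 \<in> ZZ" "point_less a1 a2"
    "dominates a1 z1" "a1 \<noteq> z1" "dominates z2 a2" "z2 \<noteq> a2"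
    using z1 z2 z12 d
    by (auto simp: a1_def a2_def mem_ZZ_iff point_less_def dominates_def prod_eq_iff)
  have "dist a1 z1 < e" "dist a2 z2 < e"
    using d dist_Pair_le[of "fst z1" "snd z1 + d" "fst z1" "snd z1"]
      dist_Pair_le[of "fst z2 + d" "snd z2" "fst z2" "snd z2"]
    by (simp_all add: a1_def a2_def dist_real_def)
  then obtain A where A: "A \<in> D" "indiff A a1 a2" "pref_prec A R"
    using rich_pref_prec[OF D R a(1-3)] e(2) a(1,2) by metis
  have "\<not> A z1 z2"
    using classical_not_pref_dominated[OF rich_classical[OF D A(1)] z1 a(1) z2 a(2)] a(4-7) A(2)
    unfolding indiff_def by blast
  then show thesis using that A by blast
qed

lemma exists_pref_prec_above:
  assumes z1: "z1 \<in> ZZ" and z2: "z2 \<in> ZZ" and z12: "fst z2 < fst z1" "snd z2 \<le> snd z1"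
    and nR: "\<not> R z1 z2"
  obtains B where "B \<in> D" "pref_prec R B" "\<not> B z1 z2"
proof -
  obtain e where e: "e > 0" "\<And>x y. x \<in> ZZ \<Longrightarrow> y \<in> ZZ \<Longrightarrow> dist x z1 < e \<Longrightarrow> dist y z2 < e \<Longrightarrow> \<not> R x y"
    using not_pref_nhds[OF rich_classical[OF D R] z1 z2 nR] by blast
  define d where "d = min (e / 4) (min ((fst z1 - fst z2) / 4) (1 / 2))"
  have d: "0 < d" "d \<le> e / 4" "d \<le> (fst z1 - fst z2) / 4" "d \<le> 1 / 2"
    using e(1) z12 unfolding d_def by (auto simp: min_def)
  have q: "0 \<le> snd z1" "snd z1 \<le> 1" "0 \<le> snd z2" "snd z2 \<le> 1" "0 \<le> fst z2"
    using z1 z2 by (auto simp: mem_ZZ_iff)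
  have P: "0 \<le> d * snd z1" "d * snd z1 \<le> d" "0 \<le> d * snd z2" "d * snd z2 \<le> d"
    "d * snd z2 \<le> snd z2" "d - d * snd z1 \<le> 1 - snd z1" "d * snd z1 - d * snd z2 \<le> snd z1 - snd z2"
    using d q z12 mult_right_le_one_le[of d "snd z1"] mult_right_le_one_le[of d "snd z2"]
      mult_left_le_one_le[of "snd z2" d] mult_left_le_one_le[of "1 - snd z1" d]
      mult_left_le_one_le[of "snd z1 - snd z2" d]
    by (simp_all add: right_diff_distrib)
  text \<open>Move z1 up-left and z2 down-right, shrinking the second coordinates towards 1 and 0
    respectively so that they stay in [0, 1] and separate even when snd z1 = snd z2.\<close>
  define b1 where "b1 = (fst z1 - d, snd z1 + (d - d * snd z1))"
  define b2 where "b2 = (fst z2 + d, snd z2 - d * snd z2)"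
  have b: "b1 \<in> ZZ" "b2 \<in> ZZ" "point_less b2 b1" "dominates b1 z1" "dominates z2 b2"
    using d q z12 P by (auto simp: b1_def b2_def mem_ZZ_iff point_less_def dominates_def)
  have b': "b1 \<noteq> z1" "z2 \<noteq> b2" using d by (auto simp: b1_def b2_def prod_eq_iff)
  have "dist b1 z1 \<le> 2 * d - d * snd z1" "dist b2 z2 \<le> d + d * snd z2"
    using P dist_Pair_le[of "fst z1 - d" "snd z1 + (d - d * snd z1)" "fst z1" "snd z1"]
      dist_Pair_le[of "fst z2 + d" "snd z2 - d * snd z2" "fst z2" "snd z2"]
    by (simp_all add: b1_def b2_def dist_real_def)
  then have "dist b1 z1 < e" "dist b2 z2 < e" using d P by linarith+
  then have "\<not> R b1 b2" using e(2) b(1,2) by blast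
  then obtain B where B: "B \<in> D" "indiff B b2 b1" "pref_prec R B"
    using rich_pref_prec[OF D R b(2,1,3)] by metis
  have "\<not> B z1 z2"
    using classical_not_pref_dominated[OF rich_classical[OF D B(1)] z1 b(1) z2 b(2) b(4) b'(1) b(5)]
      B(2)
    unfolding indiff_def by blast
  then show thesis using that B by blast
qed

end

subsection \<open>Limits of preferences\<close>

context
  fixes D :: "pref set" and Rs :: "nat \<Rightarrow> pref" and R :: pref
    and z1s z2s :: "nat \<Rightarrow> point" and z1 z2 :: point
  assumes D: "rich_single_crossing D" and Rs: "\<And>n. Rs n \<in> D"
    and lim: "limitin (order_top D) Rs R sequentially"
    and z1s: "\<And>n. z1s n \<in> ZZ" and z2s: "\<And>n. z2s n \<in> ZZ"
    and t1: "z1s \<longlonglongrightarrow> z1" and t2: "z2s \<longlonglongrightarrow> z2"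
    and pref: "\<And>n. Rs n (z1s n) (z2s n)"
begin

lemma limits_in_domain: "R \<in> D" "z1 \<in> ZZ" "z2 \<in> ZZ"
  using limitin_topspace[OF lim] closed_sequentially[OF closed_ZZ z1s t1]
    closed_sequentially[OF closed_ZZ z2s t2]
  by (auto simp: order_top_def)

lemma eventually_not_point_less_12:
  assumes nR: "\<not> R z1 z2"
  shows "\<forall>\<^sub>F n in sequentially. \<not> point_less (z1s n) (z2s n)"
proof (cases "fst z1 \<le> fst z2 \<and> snd z1 \<le> snd z2")
  case True
  note R = limits_in_domain(1) and z = limits_in_domain(2,3)
  have "snd z1 < snd z2"
    using True nR classical_dominates[OF rich_classical[OF D R] z] by (force simp: dominates_def)
  then obtain A where A: "A \<in> D" "pref_prec A R" "\<not> A z1 z2"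
    using exists_pref_prec_below[OF D R z] True nR by blast
  have "\<forall>\<^sub>F n in sequentially. pref_prec A (Rs n)"
    using eventually_pref_prec(1)[OF lim A(1,2)] .
  moreover have "\<forall>\<^sub>F n in sequentially. \<not> A (z1s n) (z2s n)"
    using eventually_not_pref[OF rich_classical[OF D A(1)] z A(3) t1 t2 z1s z2s] .
  ultimately show ?thesis
    by eventually_elim (use pref_precD z1s z2s pref in blast)
next
  case False
  then show ?thesis using eventually_not_point_less[OF t1 t2] by blast
qed

lemma eventually_not_point_less_21:
  assumes nR: "\<not> R z1 z2"
  shows "\<forall>\<^sub>F n in sequentially. \<not> point_less (z2s n) (z1s n)"
proof (cases "fst z2 \<le> fst z1 \<and> snd z2 \<le> snd z1")
  case True
  note R = limits_in_domain(1) and z = limits_in_domain(2,3)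
  have "fst z2 < fst z1"
    using True nR classical_dominates[OF rich_classical[OF D R] z] by (force simp: dominates_def)
  then obtain B where B: "B \<in> D" "pref_prec R B" "\<not> B z1 z2"
    using exists_pref_prec_above[OF D R z] True nR by blast
  have "\<forall>\<^sub>F n in sequentially. pref_prec (Rs n) B"
    using eventually_pref_prec(2)[OF lim B(1,2)] .
  moreover have "\<forall>\<^sub>F n in sequentially. \<not> B (z1s n) (z2s n)"
    using eventually_not_pref[OF rich_classical[OF D B(1)] z B(3) t1 t2 z1s z2s] .
  ultimately show ?thesis
  proof eventually_elim
    case (elim n)
    then show ?case
      using pref_prec_upper[OF _ rich_classical[OF D Rs] rich_classical[OF D B(1)] z2s z1s _ pref]
      by blast
  qed
next
  case False
  then show ?thesis using eventually_not_point_less[OF t2 t1] by blast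
qed

lemma pref_of_limits: "R z1 z2"
proof (rule ccontr)
  assume nR: "\<not> R z1 z2"
  then have "\<not> dominates z1 z2"
    using classical_dominates[OF rich_classical[OF D limits_in_domain(1)] limits_in_domain(2,3)]
    by blast
  have "\<forall>\<^sub>F n in sequentially. \<not> dominates (z1s n) (z2s n)"
  proof (cases "fst z2 < fst z1")
    case True
    then have "\<forall>\<^sub>F n in sequentially. fst (z2s n) < fst (z1s n)"
      using eventually_less_tendsto[OF tendsto_fst[OF t2] tendsto_fst[OF t1]] by blast
    then show ?thesis by eventually_elim (auto simp: dominates_def)
  next
    case False
    then have "snd z1 < snd z2" using \<open>\<not> dominates z1 z2\<close> by (auto simp: dominates_def)
    then have "\<forall>\<^sub>F n in sequentially. snd (z1s n) < snd (z2s n)"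
      using eventually_less_tendsto[OF tendsto_snd[OF t1] tendsto_snd[OF t2]] by blast
    then show ?thesis by eventually_elim (auto simp: dominates_def)
  qed
  with eventually_not_point_less_12[OF nR] eventually_not_point_less_21[OF nR]
  have "\<forall>\<^sub>F n in sequentially. dominates (z2s n) (z1s n) \<and> z2s n \<noteq> z1s n"
    by eventually_elim (metis point_less_or_dominates dominates_def order_refl)
  then have "\<forall>\<^sub>F n in sequentially. False"
    by eventually_elim
      (use classical_dominates_strict[OF rich_classical[OF D Rs] z2s z1s] pref in blast)
  then show False by simp
qed

end

theorem mainTheorem3:
  fixes D :: "pref set" and Rs :: "nat \<Rightarrow> pref" and R :: pref
    and z1s z2s :: "nat \<Rightarrow> point" and z1 z2 :: point
  assumes "rich_single_crossing D"
    and "\<And>n. Rs n \<in> D" and "R \<in> D"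
    and "limitin (order_top D) Rs R sequentially"
    and "\<And>n. z1s n \<in> ZZ" and "\<And>n. z2s n \<in> ZZ"
    and "z1s \<longlonglongrightarrow> z1" and "z2s \<longlonglongrightarrow> z2"
    and "\<And>n. indiff (Rs n) (z1s n) (z2s n)"
  shows "indiff R z1 z2"
proof -
  have "Rs n (z1s n) (z2s n)" "Rs n (z2s n) (z1s n)" for n
    using assms(9) unfolding indiff_def by blast+
  then have "R z1 z2" "R z2 z1"
    using pref_of_limits[OF assms(1,2,4,5,6,7,8)] pref_of_limits[OF assms(1,2,4,6,5,8,7)] by blast+
  then show ?thesis unfolding indiff_def by blast
qed

end
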